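(* Let $P$ be atomic. The sequent $\supset \Box(P\land\lnot\Box P\to P)\to\lnot\Box(P\land\lnot\Box P)$ has no prehistoric-cycle-free G3s proof.
   Context: S4 formulas built from atoms, $\bot$, $\to$, $\Box$, with $\lnot$ and $\land$ (handled either as abbreviations or by the standard G3 rules: $(\lnot\supset)$ from $\Gamma\supset\Delta,A$ infer $\lnot A,\Gamma\supset\Delta$; $(\supset\lnot)$ from $A,\Gamma\supset\Delta$ infer $\Gamma\supset\Delta,\lnot A$; $(\land\supset)$ from $A,B,\Gamma\supset\Delta$ infer $A\land B,\Gamma\supset\Delta$; $(\supset\land)$ from $\Gamma\supset\Delta,A$ and $\Gamma\supset\Delta,B$ infer $\Gamma\supset\Delta,A\land B$). Sequents use finite multisets; $\Box\Gamma:=\{\Box C\mid C\in\Gamma\}$. G3s rules: (Ax) $P,\Gamma\supset\Delta,P$ ($P$ atomic); $(\bot\supset)$ $\bot,\Gamma\supset\Delta$; $(\to\supset)$ from $\Gamma\supset\Delta,A$ and $B,\Gamma\supset\Delta$ infer $A\to B,\Gamma\supset\Delta$; $(\supset\to)$ from $A,\Gamma\supset\Delta,B$ infer $\Gamma\supset\Delta,A\to B$; $(\Box\supset)$ from $A,\Box A,\Gamma\supset\Delta$ infer $\Box A,\Gamma\supset\Delta$; $(\supset\Box)$ from $\Box\Gamma\supset A$ infer $\Gamma',\Box\Gamma\supset\Delta',\Box A$. Correspondence: a symbol occurrence in a side formula (formula repeated unchanged from premise to conclusion) of a premise directly corresponds to the same occurrence in the conclusion; an active formula of a premise directly corresponds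 to its topmost occurrence as a subformula of the principal formula, symbolwise. Families are equivalence classes of $\Box$-occurrences under the reflexive-symmetric-transitive closure. $i\prec j$ if some $(\supset\Box)$ rule whose principal formula $\Box A$ has outermost $\Box$ in family $j$ has a premise containing a $\Box$ of family $i$. A prehistoric cycle is $i_0\prec\cdots\prec i_{n-1}\prec i_0$ ($n\ge1$); a proof is prehistoric-cycle-free if it has none. (Equivalently, in cut-free G3s proofs, one may restrict to families having an occurrence introduced as principal $\Box$ of a $(\supset\Box)$ rule.) *)

theory Defs
  imports Main
begin

datatype 'a fm = Atom 'a | Bot | Imp "'a fm" "'a fm" | Box "'a fm"
  | Neg "'a fm" | Conj "'a fm" "'a fm"

fun subfm :: "'a fm \<Rightarrow> nat list \<Rightarrow> 'a fm" where
  "subfm f [] = f"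
| "subfm (Imp a b) (0 # p) = subfm a p"
| "subfm (Imp a b) (Suc 0 # p) = subfm b p"
| "subfm (Conj a b) (0 # p) = subfm a p"
| "subfm (Conj a b) (Suc 0 # p) = subfm b p"
| "subfm (Box a) (0 # p) = subfm a p"
| "subfm (Neg a) (0 # p) = subfm a p"
| "subfm f p = f"

fun boxpos :: "'a fm \<Rightarrow> nat list set" where
  "boxpos (Atom x) = {}"
| "boxpos Bot = {}"
| "boxpos (Imp a b) = Cons 0 ` boxpos a \<union> Cons 1 ` boxpos b"
| "boxpos (Conj a b) = Cons 0 ` boxpos a \<union> Cons 1 ` boxpos b"
| "boxpos (Box a) = insert [] (Cons 0 ` boxpos a)"
| "boxpos (Neg a) = Cons 0 ` boxpos a"

text \<open>Sequents are pairs of lists (antecedent, succedent); a rule instance names the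
  position of its principal formula (and, for the right Box rule, the positions of the
  boxed antecedent formulas kept in the premise).\<close>

datatype rl = Ax nat nat | BotL nat | ImpL nat | ImpR nat | BoxL nat | BoxR nat "nat list"
  | NegL nat | NegR nat | ConjL nat | ConjR nat

fun rule_ok :: "'a fm list \<Rightarrow> 'a fm list \<Rightarrow> rl \<Rightarrow> bool" where
  "rule_ok G D (Ax i j) = (i < length G \<and> j < length D \<and> (\<exists>P. G ! i = Atom P \<and> D ! j = Atom P))"
| "rule_ok G D (BotL i) = (i < length G \<and> G ! i = Bot)"
| "rule_ok G D (ImpL i) = (i < length G \<and> (\<exists>a b. G ! i = Imp a b))"
| "rule_ok G D (ImpR i) = (i < length D \<and> (\<exists>a b. D ! i = Imp a b))"
| "rule_ok G D (BoxL i) = (i < length G \<and> (\<exists>a. G ! i = Box a))"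
| "rule_ok G D (BoxR i js) = (i < length D \<and> (\<exists>a. D ! i = Box a) \<and> distinct js \<and>
      (\<forall>j\<in>set js. j < length G \<and> (\<exists>c. G ! j = Box c)))"
| "rule_ok G D (NegL i) = (i < length G \<and> (\<exists>a. G ! i = Neg a))"
| "rule_ok G D (NegR i) = (i < length D \<and> (\<exists>a. D ! i = Neg a))"
| "rule_ok G D (ConjL i) = (i < length G \<and> (\<exists>a b. G ! i = Conj a b))"
| "rule_ok G D (ConjR i) = (i < length D \<and> (\<exists>a b. D ! i = Conj a b))"

text \<open>A source (s, j, p) refers to the subformula at path p of the j-th formula of the
  conclusion, in the succedent if s, in the antecedent otherwise.  Each premise formula is
  given by its source in the conclusion; this is exactly the direct correspondence
  (side formulas: path [], active formulas: their position inside the principal formula).\<close>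

type_synonym src = "bool \<times> nat \<times> nat list"

definition allS :: "bool \<Rightarrow> nat \<Rightarrow> src list" where
  "allS s n = map (\<lambda>j. (s, j, [])) [0..<n]"

definition ctxS :: "bool \<Rightarrow> nat \<Rightarrow> nat \<Rightarrow> src list" where
  "ctxS s n i = map (\<lambda>j. (s, j, [])) (filter (\<lambda>j. j \<noteq> i) [0..<n])"

fun prems :: "'a fm list \<Rightarrow> 'a fm list \<Rightarrow> rl \<Rightarrow> (src list \<times> src list) list" where
  "prems G D (Ax i j) = []"
| "prems G D (BotL i) = []"
| "prems G D (ImpL i) =
    [(ctxS False (length G) i, (False, i, [0]) # allS True (length D)),
     ((False, i, [1]) # ctxS False (length G) i, allS True (length D))]"
| "prems G D (ImpR i) =
    [((True, i, [0]) # allS False (length G), (True, i, [1]) # ctxS True (length D) i)]"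
| "prems G D (BoxL i) =
    [((False, i, [0]) # allS False (length G), allS True (length D))]"
| "prems G D (BoxR i js) =
    [(map (\<lambda>j. (False, j, [])) js, [(True, i, [0])])]"
| "prems G D (NegL i) =
    [(ctxS False (length G) i, (False, i, [0]) # allS True (length D))]"
| "prems G D (NegR i) =
    [((True, i, [0]) # allS False (length G), ctxS True (length D) i)]"
| "prems G D (ConjL i) =
    [((False, i, [0]) # (False, i, [1]) # ctxS False (length G) i, allS True (length D))]"
| "prems G D (ConjR i) =
    [(allS False (length G), (True, i, [0]) # ctxS True (length D) i),
     (allS False (length G), (True, i, [1]) # ctxS True (length D) i)]"

definition srcfm :: "'a fm list \<Rightarrow> 'a fm list \<Rightarrow> src \<Rightarrow> 'a fm" where
  "srcfm G D x = (case x of (s, j, p) \<Rightarrow> subfm ((if s then D else G) ! j) p)"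

definition inst :: "'a fm list \<Rightarrow> 'a fm list \<Rightarrow> src list \<times> src list \<Rightarrow> 'a fm list \<times> 'a fm list" where
  "inst G D pr = (map (srcfm G D) (fst pr), map (srcfm G D) (snd pr))"

datatype 'a ptree = PT "'a fm list" "'a fm list" rl "'a ptree list"

fun ant :: "'a ptree \<Rightarrow> 'a fm list" where "ant (PT G D r ts) = G"
fun suc :: "'a ptree \<Rightarrow> 'a fm list" where "suc (PT G D r ts) = D"
fun rlof :: "'a ptree \<Rightarrow> rl" where "rlof (PT G D r ts) = r"
fun kids :: "'a ptree \<Rightarrow> 'a ptree list" where "kids (PT G D r ts) = ts"

inductive valid :: "'a ptree \<Rightarrow> bool" where
  "rule_ok G D r \<Longrightarrow>
   list_all2 (\<lambda>t pr. (ant t, suc t) = inst G D pr) ts (prems G D r) \<Longrightarrow>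
   (\<forall>t\<in>set ts. valid t) \<Longrightarrow> valid (PT G D r ts)"

fun subtree :: "'a ptree \<Rightarrow> nat list \<Rightarrow> 'a ptree option" where
  "subtree t [] = Some t"
| "subtree (PT G D r ts) (k # a) = (if k < length ts then subtree (ts ! k) a else None)"

text \<open>An occurrence: (node address, succedent?, formula index, path of the Box symbol).\<close>

type_synonym occ = "nat list \<times> bool \<times> nat \<times> nat list"

definition side :: "bool \<Rightarrow> 'a ptree \<Rightarrow> 'a fm list" where
  "side s t = (if s then suc t else ant t)"

definition is_occ :: "'a ptree \<Rightarrow> occ \<Rightarrow> bool" where
  "is_occ T x = (case x of (a, s, j, p) \<Rightarrow>
     (\<exists>t. subtree T a = Some t \<and> j < length (side s t) \<and> p \<in> boxpos (side s t ! j)))"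

text \<open>Direct correspondence: a Box occurrence in premise k of the node at address a
  corresponds to the same symbol occurrence in the conclusion.\<close>

definition dcorr :: "'a ptree \<Rightarrow> (occ \<times> occ) set" where
  "dcorr T = {((a @ [k], s, j, p), (a, s', j', q @ p)) | a k s j p s' j' q t.
     subtree T a = Some t \<and> is_occ T (a @ [k], s, j, p) \<and>
     k < length (prems (ant t) (suc t) (rlof t)) \<and>
     j < length ((if s then snd else fst) (prems (ant t) (suc t) (rlof t) ! k)) \<and>
     ((if s then snd else fst) (prems (ant t) (suc t) (rlof t) ! k)) ! j = (s', j', q)}"

definition samefam :: "'a ptree \<Rightarrow> occ \<Rightarrow> occ \<Rightarrow> bool" where
  "samefam T x y = (is_occ T x \<and> (x, y) \<in> (dcorr T \<union> (dcorr T)\<inverse>)\<^sup>*)"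

text \<open>(x, y) \<in> prec T iff family(x) precedes family(y): some right Box rule at address a has
  its principal Box in the family of y and its premise (address a @ [0]) contains a Box
  of the family of x.\<close>

definition prec :: "'a ptree \<Rightarrow> (occ \<times> occ) set" where
  "prec T = {(x, y). \<exists>a t i js. subtree T a = Some t \<and> rlof t = BoxR i js \<and>
      samefam T (a, True, i, []) y \<and> (\<exists>s j p. samefam T (a @ [0], s, j, p) x)}"

definition pcf :: "'a ptree \<Rightarrow> bool" where
  "pcf T = (\<not> (\<exists>x. (x, x) \<in> (prec T)\<^sup>+))"

definition goal :: "'a \<Rightarrow> 'a fm" where
  "goal P = Imp (Box (Imp (Conj (Atom P) (Neg (Box (Atom P)))) (Atom P)))
                (Neg (Box (Conj (Atom P) (Neg (Box (Atom P))))))"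

end

theory Submission
  imports Defs
begin

text \<open>Write A for P \<and> \<not>\<box>P, so the end-sequent is \<supset> \<box>(A \<rightarrow> P) \<rightarrow> \<not>\<box>A.
  Going up a branch from the root, no axiom is reached before a (\<supset>\<box>) step, and a
  (\<supset>\<box>) step dropping \<box>A leads to \<box>(A \<rightarrow> P), A \<rightarrow> P \<supset> P, A, every rule on which has a
  premise of the same shape. As proofs are finite, some (\<supset>\<box>) step keeps \<box>A in its premise.
  Tracing occurrences down to the root, every formula of the proof is a signed subformula of
  the end-sequent and every \<box>-occurrence lies in the family of the position it reaches.
  The only positive boxed subformula is the \<box>P inside \<not>\<box>A, so the principal \<box> of that
  step lies in its family; the only negative \<box>A is the one in \<not>\<box>A, whose inner \<box>P is
  that same occurrence. So the family of the principal \<box> precedes itself.\<close>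

lemma map_srcfm_allS [simp]:
  "map (srcfm G D) (allS False (length G)) = G"
  "map (srcfm G D) (allS True (length D)) = D"
  by (auto simp: allS_def srcfm_def intro: nth_equalityI)

lemma set_map_srcfm_ctxS:
  "set (map (srcfm G D) (ctxS False (length G) i)) \<subseteq> set G"
  "set (map (srcfm G D) (ctxS True (length D) i)) \<subseteq> set D"
  by (auto simp: ctxS_def srcfm_def)

lemma subtree_snoc:
  "subtree T (a @ [k]) = (case subtree T a of None \<Rightarrow> None
     | Some t \<Rightarrow> if k < length (kids t) then Some (kids t ! k) else None)"
  by (induction a arbitrary: T) (case_tac T; simp)+

lemma valid_PT_premise:
  assumes "valid (PT G D r ts)" and "k < length ts"
  shows "(ant (ts ! k), suc (ts ! k)) = inst G D (prems G D r ! k)" and "valid (ts ! k)"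
  using assms by (auto elim!: valid.cases dest: list_all2_nthD)

lemma valid_subtree: "valid T \<Longrightarrow> subtree T a = Some t \<Longrightarrow> valid t"
proof (induction a arbitrary: T)
  case (Cons c a)
  then show ?case
    by (cases T) (auto dest: valid_PT_premise(2) split: if_splits)
qed simp

lemma valid_BoxR_premise:
  assumes "valid T" and "subtree T a = Some t" and "rlof t = BoxR i js"
  obtains t' c where "subtree T (a @ [0]) = Some t'" and "ant t' = map ((!) (ant t)) js"
    and "i < length (suc t)" and "suc t ! i = Box c"
proof -
  obtain G D ts where t: "t = PT G D (BoxR i js) ts"
    using assms(3) by (cases t) auto
  have "valid t" using valid_subtree[OF assms(1,2)] .
  then have ok: "rule_ok G D (BoxR i js)" and len: "length ts = 1"
    by (auto simp: t elim!: valid.cases dest!: list_all2_lengthD)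
  have "(ant (ts ! 0), suc (ts ! 0)) = inst G D (prems G D (BoxR i js) ! 0)"
    using valid_PT_premise(1)[of G D "BoxR i js" ts 0] \<open>valid t\<close> len by (simp add: t)
  then have "ant (ts ! 0) = map ((!) G) js"
    using ok by (auto simp: inst_def srcfm_def)
  then show thesis
    using that[of "ts ! 0"] assms(2) ok len by (auto simp: t subtree_snoc)
qed

lemma valid_escapes_invariant:
  assumes "valid T" and "I (ant T) (suc T)"
    and step: "\<And>G D r. rule_ok G D r \<Longrightarrow> I G D \<Longrightarrow>
      Q G D r \<or> (\<exists>k < length (prems G D r). case_prod I (inst G D (prems G D r ! k)))"
  shows "\<exists>a t. subtree T a = Some t \<and> Q (ant t) (suc t) (rlof t)"
  using assms(1,2)
proof (induction T rule: valid.induct)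
  case (1 G D r ts)
  have len: "length ts = length (prems G D r)"
    using "1.hyps"(2) by (rule list_all2_lengthD)
  from step[OF "1.hyps"(1)] "1.prems" consider
      "Q G D r"
    | k where "k < length ts" "case_prod I (inst G D (prems G D r ! k))"
    using len by auto
  then show ?case
  proof cases
    case 1
    then show ?thesis by (intro exI[of _ "[]"]) auto
  next
    case (2 k)
    then have "I (ant (ts ! k)) (suc (ts ! k))"
      using list_all2_nthD[OF "1.hyps"(2), of k] len by (auto split: prod.splits)
    then obtain a t where "subtree (ts ! k) a = Some t" "Q (ant t) (suc t) (rlof t)"
      using "1.IH" \<open>k < length ts\<close> by auto
    then show ?thesis
      using \<open>k < length ts\<close> by (intro exI[of _ "k # a"]) auto
  qed
qed

text \<open>Polarity True means succedent position; child_sign s f c s' says that the c-th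
  immediate subformula of f has polarity s' when f has polarity s.\<close>

inductive child_sign :: "bool \<Rightarrow> 'a fm \<Rightarrow> nat \<Rightarrow> bool \<Rightarrow> bool" where
  "child_sign s (Imp a b) 0 (\<not> s)"
| "child_sign s (Imp a b) 1 s"
| "child_sign s (Box a) 0 s"
| "child_sign s (Neg a) 0 (\<not> s)"
| "child_sign s (Conj a b) 0 s"
| "child_sign s (Conj a b) 1 s"

inductive signed_pos :: "'a fm \<Rightarrow> bool \<Rightarrow> nat list \<Rightarrow> bool" for F where
  root: "signed_pos F True []"
| child: "signed_pos F s q \<Longrightarrow> child_sign s (subfm F q) c s' \<Longrightarrow> signed_pos F s' (q @ [c])"

lemma subfm_Cons_child: "child_sign s f c s' \<Longrightarrow> subfm f (c # r) = subfm (subfm f [c]) r"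
  by (induction rule: child_sign.induct) auto

lemma boxpos_child: "child_sign s f c s' \<Longrightarrow> p \<in> boxpos (subfm f [c]) \<Longrightarrow> c # p \<in> boxpos f"
  by (induction rule: child_sign.induct) auto

lemma subfm_append_signed_pos:
  "signed_pos F s q \<Longrightarrow> subfm F (q @ r) = subfm (subfm F q) r"
proof (induction arbitrary: r rule: signed_pos.induct)
  case (child s q c s')
  then show ?case
    by (metis append.assoc append_Cons append_Nil subfm_Cons_child)
qed simp

lemma set_allS: "x \<in> set (allS s n) \<longleftrightarrow> (\<exists>j < n. x = (s, j, []))"
  by (auto simp: allS_def)

lemma set_ctxS: "x \<in> set (ctxS s n i) \<longleftrightarrow> (\<exists>j < n. j \<noteq> i \<and> x = (s, j, []))"
  by (auto simp: ctxS_def)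

lemma premise_source_cases:
  assumes "rule_ok G D r" and "k < length (prems G D r)"
    and "(s', j', q) \<in> set ((if s then snd else fst) (prems G D r ! k))"
  shows "j' < length (if s' then D else G) \<and>
    (s' = s \<and> q = [] \<or> (\<exists>c. q = [c] \<and> child_sign s' ((if s' then D else G) ! j') c s))"
  using assms
  by (cases r; cases s; auto simp: less_Suc_eq set_allS set_ctxS child_sign.simps)

lemma premise_formula_source:
  assumes "valid T" and "subtree T b = Some t0" and "k < length (kids t0)"
    and "j < length (side s (kids t0 ! k))"
  obtains s' j' q' where "j' < length (side s' t0)"
    and "s' = s \<and> q' = [] \<or> (\<exists>c. q' = [c] \<and> child_sign s' (side s' t0 ! j') c s)"
    and "side s (kids t0 ! k) ! j = subfm (side s' t0 ! j') q'"
    and "\<And>p. p \<in> boxpos (side s (kids t0 ! k) ! j) \<Longrightarrow>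
      ((b @ [k], s, j, p), (b, s', j', q' @ p)) \<in> dcorr T"
proof -
  obtain G D r ts where t0: "t0 = PT G D r ts" by (cases t0)
  have "valid t0" using valid_subtree[OF assms(1,2)] .
  then have ok: "rule_ok G D r" and len: "length ts = length (prems G D r)"
    by (auto simp: t0 elim: valid.cases dest: list_all2_lengthD)
  have k: "k < length (prems G D r)" using assms(3) len by (simp add: t0)
  define L where "L = (if s then snd else fst) (prems G D r ! k)"
  have "(ant (ts ! k), suc (ts ! k)) = inst G D (prems G D r ! k)"
    using valid_PT_premise(1) \<open>valid t0\<close> assms(3) by (simp add: t0)
  then have side_eq: "side s (kids t0 ! k) = map (srcfm G D) L"
    by (cases s) (auto simp: t0 L_def side_def inst_def)
  then have j: "j < length L" using assms(4) by simp
  obtain s' j' q' where src: "L ! j = (s', j', q')" by (cases "L ! j") auto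
  have source: "j' < length (side s' t0) \<and>
      (s' = s \<and> q' = [] \<or> (\<exists>c. q' = [c] \<and> child_sign s' (side s' t0 ! j') c s))"
    using premise_source_cases[OF ok k, of s' j' q' s] nth_mem[OF j] src
    by (cases s') (auto simp: L_def side_def t0)
  moreover have "side s (kids t0 ! k) ! j = subfm (side s' t0 ! j') q'"
    using side_eq j src by (simp add: srcfm_def side_def t0)
  moreover have "((b @ [k], s, j, p), (b, s', j', q' @ p)) \<in> dcorr T"
    if "p \<in> boxpos (side s (kids t0 ! k) ! j)" for p
    unfolding dcorr_def using assms(2-4) k j src that
    by (auto simp: is_occ_def L_def t0 subtree_snoc intro!: exI[of _ b] exI[of _ k])
  ultimately show thesis
    using that by blast
qed

lemma trace_to_root:
  assumes "valid T" and "ant T = []" and "suc T = [F]"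
  shows "subtree T a = Some t \<Longrightarrow> j < length (side s t) \<Longrightarrow>
    \<exists>q. signed_pos F s q \<and> subfm F q = side s t ! j \<and>
      (\<forall>p \<in> boxpos (side s t ! j). ((a, s, j, p), ([], True, 0, q @ p)) \<in> (dcorr T)\<^sup>*)"
proof (induction a arbitrary: t s j rule: rev_induct)
  case Nil
  then show ?case
    using assms(2,3) by (cases s) (auto simp: side_def intro: signed_pos.root)
next
  case (snoc k b)
  from snoc.prems(1) obtain t0 where t0: "subtree T b = Some t0" "k < length (kids t0)"
    and t: "t = kids t0 ! k"
    by (auto simp: subtree_snoc split: option.splits if_splits)
  obtain s' j' q' where j': "j' < length (side s' t0)"
    and step: "s' = s \<and> q' = [] \<or> (\<exists>c. q' = [c] \<and> child_sign s' (side s' t0 ! j') c s)"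
    and fj: "side s t ! j = subfm (side s' t0 ! j') q'"
    and dc: "\<And>p. p \<in> boxpos (side s t ! j) \<Longrightarrow> ((b @ [k], s, j, p), (b, s', j', q' @ p)) \<in> dcorr T"
    using premise_formula_source[OF assms(1) t0] snoc.prems(2) unfolding t by metis
  obtain q0 where sp0: "signed_pos F s' q0" and q0: "subfm F q0 = side s' t0 ! j'"
    and chain0: "\<forall>p \<in> boxpos (side s' t0 ! j').
      ((b, s', j', p), ([], True, 0, q0 @ p)) \<in> (dcorr T)\<^sup>*"
    using snoc.IH[OF t0(1) j'] by blast
  show ?case
  proof (intro exI conjI ballI)
    show "signed_pos F s (q0 @ q')"
      using step sp0 q0 by (auto intro: signed_pos.child)
    show "subfm F (q0 @ q') = side s t ! j"
      using subfm_append_signed_pos[OF sp0] q0 fj by simp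
  next
    fix p assume p: "p \<in> boxpos (side s t ! j)"
    have "q' @ p \<in> boxpos (side s' t0 ! j')"
      using step p fj boxpos_child by auto
    then show "((b @ [k], s, j, p), ([], True, 0, (q0 @ q') @ p)) \<in> (dcorr T)\<^sup>*"
      using dc[OF p] chain0 by (auto intro: converse_rtrancl_into_rtrancl)
  qed
qed

lemma samefam_common_root:
  assumes "is_occ T x" and "(x, z) \<in> (dcorr T)\<^sup>*" and "(y, z) \<in> (dcorr T)\<^sup>*"
  shows "samefam T x y"
proof -
  let ?S = "dcorr T \<union> (dcorr T)\<inverse>"
  have "(dcorr T)\<^sup>* \<subseteq> ?S\<^sup>*" and "((dcorr T)\<inverse>)\<^sup>* \<subseteq> ?S\<^sup>*"
    by (rule rtrancl_mono, blast)+
  moreover have "(z, y) \<in> ((dcorr T)\<inverse>)\<^sup>*"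
    using assms(3) by (simp add: rtrancl_converse)
  ultimately show ?thesis
    using assms(1,2) unfolding samefam_def by (blast intro: rtrancl_trans)
qed

lemma not_pcf_BoxR_shared_root:
  assumes "subtree T a = Some t" and "rlof t = BoxR i js"
    and "is_occ T (a, True, i, [])" and "is_occ T (a @ [0], s, j, p)"
    and "((a, True, i, []), z) \<in> (dcorr T)\<^sup>*" and "((a @ [0], s, j, p), z) \<in> (dcorr T)\<^sup>*"
  shows "\<not> pcf T"
proof -
  let ?x = "(a, True, i, [] :: nat list)"
  have "samefam T ?x ?x" and "samefam T (a @ [0], s, j, p) ?x"
    using samefam_common_root assms(3-6) by blast+
  then have "(?x, ?x) \<in> prec T"
    using assms(1,2) unfolding prec_def by blast
  then show ?thesis
    unfolding pcf_def by blast
qed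

abbreviation fmA :: "'a \<Rightarrow> 'a fm" where
  "fmA P \<equiv> Conj (Atom P) (Neg (Box (Atom P)))"

lemma signed_pos_goal:
  "signed_pos (goal P) s q \<Longrightarrow> (s, q) \<in> {(True, []), (False, [0]), (False, [0, 0]),
     (True, [0, 0, 0]), (True, [0, 0, 0, 0]), (True, [0, 0, 0, 1]), (False, [0, 0, 0, 1, 0]),
     (False, [0, 0, 0, 1, 0, 0]), (False, [0, 0, 1]), (True, [1]), (False, [1, 0]),
     (False, [1, 0, 0]), (False, [1, 0, 0, 0]), (False, [1, 0, 0, 1]), (True, [1, 0, 0, 1, 0]),
     (True, [1, 0, 0, 1, 0, 0])}"
proof (induction rule: signed_pos.induct)
  case (child s q c s')
  from child.IH child.hyps(2) show ?case
    by (elim insertE emptyE) (auto simp: goal_def child_sign.simps)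
qed simp

lemma positive_box_in_goal:
  "signed_pos (goal P) True q \<Longrightarrow> subfm (goal P) q = Box c \<Longrightarrow> q = [1, 0, 0, 1, 0] \<and> c = Atom P"
  by (drule signed_pos_goal) (auto simp: goal_def)

lemma negative_box_A_in_goal:
  "signed_pos (goal P) False q \<Longrightarrow> subfm (goal P) q = Box (fmA P) \<Longrightarrow> q = [1, 0]"
  by (drule signed_pos_goal) (auto simp: goal_def)

lemma succedent_box_traces_to_goal:
  assumes "valid T" and "ant T = []" and "suc T = [goal P]"
    and "subtree T a = Some t" and "i < length (suc t)" and "suc t ! i = Box c"
  shows "((a, True, i, []), ([], True, 0, [1, 0, 0, 1, 0])) \<in> (dcorr T)\<^sup>*"
proof -
  obtain q where "signed_pos (goal P) True q" "subfm (goal P) q = Box c"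
    and "\<forall>p \<in> boxpos (Box c). ((a, True, i, p), ([], True, 0, q @ p)) \<in> (dcorr T)\<^sup>*"
    using trace_to_root[OF assms(1-4), of i True] assms(5,6) by (auto simp: side_def)
  then show ?thesis
    using positive_box_in_goal by fastforce
qed

lemma antecedent_box_A_traces_to_goal:
  assumes "valid T" and "ant T = []" and "suc T = [goal P]"
    and "subtree T a = Some t" and "j < length (ant t)" and "ant t ! j = Box (fmA P)"
  shows "((a, False, j, [0, 1, 0]), ([], True, 0, [1, 0, 0, 1, 0])) \<in> (dcorr T)\<^sup>*"
proof -
  obtain q where "signed_pos (goal P) False q" "subfm (goal P) q = Box (fmA P)"
    and "\<forall>p \<in> boxpos (Box (fmA P)). ((a, False, j, p), ([], True, 0, q @ p)) \<in> (dcorr T)\<^sup>*"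
    using trace_to_root[OF assms(1-4), of j False] assms(5,6) by (auto simp: side_def)
  then show ?thesis
    using negative_box_A_in_goal by fastforce
qed

text \<open>goal_seq describes the sequents of a branch below its first (\<supset>\<box>) step, stuck_seq
  the premise of a (\<supset>\<box>) step on a goal_seq sequent that drops \<box>A.\<close>

definition stuck_seq :: "'a \<Rightarrow> 'a fm list \<Rightarrow> 'a fm list \<Rightarrow> bool" where
  "stuck_seq P G D \<longleftrightarrow> set G \<subseteq> {Box (Imp (fmA P) (Atom P)), Imp (fmA P) (Atom P)}
     \<and> set D \<subseteq> {Atom P, fmA P}"

lemma stuck_seq_step:
  assumes ok: "rule_ok G D r" and stuck: "stuck_seq P G D"
  shows "0 < length (prems G D r) \<and> case_prod (stuck_seq P) (inst G D (prems G D r ! 0))"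
proof (cases r)
  case (ImpL i)
  with ok stuck have "G ! i = Imp (fmA P) (Atom P)"
    by (auto simp: stuck_seq_def dest: subsetD[OF _ nth_mem])
  then show ?thesis
    using ImpL stuck set_map_srcfm_ctxS(1)[of G D i] by (auto simp: stuck_seq_def inst_def srcfm_def)
next
  case (BoxL i)
  with ok stuck have "G ! i = Box (Imp (fmA P) (Atom P))"
    by (auto simp: stuck_seq_def dest: subsetD[OF _ nth_mem])
  then show ?thesis
    using BoxL stuck by (auto simp: stuck_seq_def inst_def srcfm_def)
next
  case (ConjR i)
  with ok stuck have "D ! i = fmA P"
    by (auto simp: stuck_seq_def dest: subsetD[OF _ nth_mem])
  then show ?thesis
    using ConjR stuck set_map_srcfm_ctxS(2)[of G D i] by (auto simp: stuck_seq_def inst_def srcfm_def)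
qed (use ok stuck in \<open>auto simp: stuck_seq_def dest: subsetD[OF _ nth_mem]\<close>)

definition goal_seq :: "'a \<Rightarrow> 'a fm list \<Rightarrow> 'a fm list \<Rightarrow> bool" where
  "goal_seq P G D \<longleftrightarrow>
     set G \<subseteq> {Box (Imp (fmA P) (Atom P)), Imp (fmA P) (Atom P), Box (fmA P), fmA P,
       Neg (Box (Atom P)), Atom P}
     \<and> set D \<subseteq> {goal P, Neg (Box (fmA P)), Box (Atom P)}"

lemma goal_seq_step:
  assumes ok: "rule_ok G D r" and gs: "goal_seq P G D" and not_BoxR: "\<forall>i js. r \<noteq> BoxR i js"
  shows "\<exists>k < length (prems G D r). case_prod (goal_seq P) (inst G D (prems G D r ! k))"
proof (cases r)
  case (ImpL i)
  with ok gs have "G ! i = Imp (fmA P) (Atom P)"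
    by (auto simp: goal_seq_def dest: subsetD[OF _ nth_mem])
  then show ?thesis using ImpL gs set_map_srcfm_ctxS(1)[of G D i]
    by (intro exI[of _ 1]) (auto simp: goal_seq_def inst_def srcfm_def)
next
  case (ImpR i)
  with ok gs have "D ! i = goal P"
    by (auto simp: goal_seq_def goal_def dest: subsetD[OF _ nth_mem])
  then show ?thesis using ImpR gs set_map_srcfm_ctxS(2)[of G D i]
    by (intro exI[of _ 0]) (auto simp: goal_seq_def inst_def srcfm_def goal_def)
next
  case (BoxL i)
  with ok gs have "G ! i \<in> {Box (Imp (fmA P) (Atom P)), Box (fmA P)}"
    by (auto simp: goal_seq_def dest: subsetD[OF _ nth_mem])
  then show ?thesis using BoxL gs
    by (intro exI[of _ 0]) (auto simp: goal_seq_def inst_def srcfm_def)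
next
  case (NegL i)
  with ok gs have "G ! i = Neg (Box (Atom P))"
    by (auto simp: goal_seq_def dest: subsetD[OF _ nth_mem])
  then show ?thesis using NegL gs set_map_srcfm_ctxS(1)[of G D i]
    by (intro exI[of _ 0]) (auto simp: goal_seq_def inst_def srcfm_def)
next
  case (NegR i)
  with ok gs have "D ! i = Neg (Box (fmA P))"
    by (auto simp: goal_seq_def goal_def dest: subsetD[OF _ nth_mem])
  then show ?thesis using NegR gs set_map_srcfm_ctxS(2)[of G D i]
    by (intro exI[of _ 0]) (auto simp: goal_seq_def inst_def srcfm_def)
next
  case (ConjL i)
  with ok gs have "G ! i = fmA P"
    by (auto simp: goal_seq_def dest: subsetD[OF _ nth_mem])
  then show ?thesis using ConjL gs set_map_srcfm_ctxS(1)[of G D i]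
    by (intro exI[of _ 0]) (auto simp: goal_seq_def inst_def srcfm_def)
qed (use ok gs not_BoxR in \<open>auto simp: goal_seq_def goal_def dest: subsetD[OF _ nth_mem]\<close>)

lemma goal_seq_BoxR_dropping_box_A:
  assumes ok: "rule_ok G D (BoxR i js)" and gs: "goal_seq P G D"
    and drop: "Box (fmA P) \<notin> (!) G ` set js"
  shows "case_prod (stuck_seq P) (inst G D (prems G D (BoxR i js) ! 0))"
proof -
  have "G ! j = Box (Imp (fmA P) (Atom P))" if j: "j \<in> set js" for j
  proof -
    from ok j obtain c where "j < length G" "G ! j = Box c" by auto
    moreover have "G ! j \<noteq> Box (fmA P)" using drop j by (metis image_eqI)
    ultimately show ?thesis
      using gs by (auto simp: goal_seq_def dest: subsetD[OF _ nth_mem])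
  qed
  moreover from ok gs have "D ! i = Box (Atom P)"
    by (auto simp: goal_seq_def goal_def dest: subsetD[OF _ nth_mem])
  ultimately show ?thesis
    by (auto simp: stuck_seq_def inst_def srcfm_def)
qed

lemma goal_proof_has_BoxR_keeping_box_A:
  assumes "valid T" and "ant T = []" and "suc T = [goal P]"
  shows "\<exists>a t i js. subtree T a = Some t \<and> rlof t = BoxR i js \<and> Box (fmA P) \<in> (!) (ant t) ` set js"
proof -
  let ?I = "\<lambda>G D. goal_seq P G D \<or> stuck_seq P G D"
  let ?Q = "\<lambda>G D r. \<exists>i js. r = BoxR i js \<and> Box (fmA P) \<in> (!) G ` set js"
  have "?Q G D r \<or> (\<exists>k < length (prems G D r). case_prod ?I (inst G D (prems G D r ! k)))"
    if ok: "rule_ok G D r" and "?I G D" for G D r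
  proof (cases "stuck_seq P G D")
    case True
    from stuck_seq_step[OF ok True] show ?thesis
      by (intro disjI2 exI[of _ 0]) (auto split: prod.splits)
  next
    case False
    with that(2) have gs: "goal_seq P G D" by blast
    show ?thesis
    proof (cases "\<exists>i js. r = BoxR i js")
      case True
      then obtain i js where r: "r = BoxR i js" by blast
      show ?thesis
        using goal_seq_BoxR_dropping_box_A[OF ok[unfolded r] gs]
        by (cases "Box (fmA P) \<in> (!) G ` set js") (auto simp: r split: prod.splits)
    next
      case False
      with goal_seq_step[OF ok gs] show ?thesis
        by (simp add: split_beta) blast
    qed
  qed
  moreover have "?I (ant T) (suc T)"
    using assms(2,3) by (simp add: goal_seq_def)
  ultimately show ?thesis
    using valid_escapes_invariant[OF assms(1), where I = ?I and Q = ?Q] by blast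
qed

theorem mainTheorem10:
  fixes P :: 'a
  shows "\<not> (\<exists>T :: 'a ptree. valid T \<and> ant T = [] \<and> suc T = [goal P] \<and> pcf T)"
proof
  assume "\<exists>T :: 'a ptree. valid T \<and> ant T = [] \<and> suc T = [goal P] \<and> pcf T"
  then obtain T :: "'a ptree" where T: "valid T" "ant T = []" "suc T = [goal P]" and "pcf T"
    by blast
  obtain a t i js where node: "subtree T a = Some t" "rlof t = BoxR i js"
    and "Box (fmA P) \<in> (!) (ant t) ` set js"
    using goal_proof_has_BoxR_keeping_box_A[OF T] by blast
  then obtain k where k: "k < length js" "ant t ! (js ! k) = Box (fmA P)"
    by (auto simp: in_set_conv_nth)
  obtain t' c where t': "subtree T (a @ [0]) = Some t'" "ant t' = map ((!) (ant t)) js"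
    and i: "i < length (suc t)" "suc t ! i = Box c"
    using valid_BoxR_premise[OF T(1) node] .
  have "is_occ T (a, True, i, [])" and "is_occ T (a @ [0], False, k, [0, 1, 0])"
    using node(1) t' i k by (auto simp: is_occ_def side_def)
  moreover have "((a, True, i, []), ([], True, 0, [1, 0, 0, 1, 0])) \<in> (dcorr T)\<^sup>*"
    using succedent_box_traces_to_goal[OF T node(1) i] .
  moreover have "((a @ [0], False, k, [0, 1, 0]), ([], True, 0, [1, 0, 0, 1, 0])) \<in> (dcorr T)\<^sup>*"
    using antecedent_box_A_traces_to_goal[OF T t'(1)] k t'(2) by simp
  ultimately show False
    using not_pcf_BoxR_shared_root[OF node] \<open>pcf T\<close> by blast
qed

end
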